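(* The following bilinear equations hold for all $k,N\in\mathbb{Z}$: \begin{align*} &\tau^{k+1}_{N+1}\tau^{k+2}_{N-1} -Q^{(k-4N+2)/2}\gamma^{-2}\alpha_0\tau^{k+3}_{N}\tau^{k}_{N} -Q^{-k+4N-2}\gamma^{4}{\alpha_0}^{-2}\tau^{k+1}_{N}\tau^{k+2}_{N}=0,\\ &\tau^{k+2}_{N+1}\tau^{k+1}_{N-1} -Q^{(k+4N+2)/2}\gamma^{2}\alpha_0\tau^{k+3}_{N}\tau^{k}_{N} -Q^{-k-4N-2}\gamma^{-4}{\alpha_0}^{-2}\tau^{k+2}_{N}\tau^{k+1}_{N}=0,\\ &Q^{-(3k-4N+4)/2}\gamma^{2}{\alpha_0}^{-3}\tau^{k+3}_{N}\tau^{k}_{N+1} -Q^{-3k+4N-4}\gamma^{4}{\alpha_0}^{-6}\tau^{k+1}_{N}\tau^{k+2}_{N+1} -\tau^{k+1}_{N+1}\tau^{k+2}_{N}=0,\\ &Q^{-(3k+4N+8)/2}\gamma^{-2}{\alpha_0}^{-3}\tau^{k+3}_{N+1}\tau^{k}_{N} -Q^{-3k-4N-8}\gamma^{-4}{\alpha_0}^{-6}\tau^{k+2}_{N}\tau^{k+1}_{N+1} -\tau^{k+2}_{N+1}\tau^{k+1}_{N}=0. \end{align*}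
   Context: Let $q,c,a_0,a_1,a_2\in\mathbb{C}^\times$ with $a_0a_1a_2=q$, and let $\tau_i,\overline{\tau}_i$ ($i\in\mathbb{Z}/3\mathbb{Z}$) be variables (the $\tau$ functions of the $q$-Painlevé III system). The extended affine Weyl group $\widetilde{W}((A_2+A_1)^{(1)})=\langle s_0,s_1,s_2,\pi,w_0,w_1,r\rangle$ acts on them (elements act on functions from the right, $w.F(a_i,\tau_j)=F(a_i.w,\tau_j.w)$) by: $s_i(a_i)=a_i^{-1}$, $s_i(a_{i\pm1})=a_{i\pm1}a_i$, $\pi(a_i)=a_{i+1}$, $w_0,w_1,r$ fix all $a_i$; $s_i(\tau_i)=\dfrac{u_i\tau_{i+1}\overline{\tau}_{i-1}+\overline{\tau}_{i+1}\tau_{i-1}}{u_i^{1/2}\overline{\tau}_i}$, $s_i(\overline{\tau}_i)=\dfrac{v_i\overline{\tau}_{i+1}\tau_{i-1}+\tau_{i+1}\overline{\tau}_{i-1}}{v_i^{1/2}\tau_i}$, $s_i$ fixes $\tau_j,\overline{\tau}_j$ for $j\neq i$; $\pi(\tau_i)=\tau_{i+1}$, $\pi(\overline{\tau}_i)=\overline{\tau}_{i+1}$; $w_0(\overline{\tau}_i)=\dfrac{a_{i+1}^{1/3}(\overline{\tau}_i\tau_{i+1}\tau_{i+2}+u_{i-1}\tau_i\overline{\tau}_{i+1}\tau_{i+2}+u_{i+1}^{-1}\tau_i\tau_{i+1}\overline{\tau}_{i+2})}{a_{i+2}^{1/3}\overline{\tau}_{i+1}\overline{\tau}_{i+2}}$,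 $w_0(\tau_i)=\tau_i$; $r(\tau_i)=\overline{\tau}_i$, $r(\overline{\tau}_i)=\tau_i$; where $u_i=q^{-1/3}c^{-2/3}a_i$, $v_i=q^{1/3}c^{2/3}a_i$. The translation $T_4=rw_0$ fixes $a_0,a_1,a_2$ and maps $c\mapsto qc$. Set $R_1=\pi^2s_1$ (so $R_1^2=T_1=\pi s_2 s_1$) and specialize $a_2=q^{1/2}$; then $R_1$ acts on parameters as $(a_0,a_1,c)\mapsto(q^{1/2}a_0,q^{-1/2}a_1,c)$. Define $\tau^k_N=R_1^kT_4^N(\tau_1)$ for $k,N\in\mathbb{Z}$ (so $\tau_0=\tau^{-2}_0$, $\tau_1=\tau^0_0$, $\tau_2=\tau^{-1}_0$, $\overline{\tau}_0=\tau^{-2}_1$, $\overline{\tau}_1=\tau^0_1$, $\overline{\tau}_2=\tau^{-1}_1$), and put $\alpha_0=a_0^{1/6}$, $\gamma=c^{1/6}$, $Q=q^{1/6}$. *)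

theory Defs
  imports Complex_Main
begin

text \<open>
  Model of the action of the extended affine Weyl group on the parameters
  and tau functions of q-P_III.  A point of the space is a record holding the
  sixth roots alpha_i = a_i^(1/6), gamma = c^(1/6) and the values of
  tau_i, taubar_i (indices read modulo 3).  The fixed parameter q enters via
  Q = q^(1/6).  In these variables
    u_i = Q^-2 gamma^-4 alpha_i^6,  u_i^(1/2) = Q^-1 gamma^-2 alpha_i^3,
    v_i = Q^2 gamma^4 alpha_i^6,    v_i^(1/2) = Q gamma^2 alpha_i^3,
    a_i^(1/3) = alpha_i^2.
  For a group element w, the function act_w sends a point x to the point
  whose coordinates are the values at x of w(coordinate).  Since
  (w1 w2)(F) = w1(w2(F)) and w(F(a,tau)) = F(w(a),w(tau)), the point map of
  w1 w2 is act_w2 composed after act_w1, i.e. act_w2 (act_w1 x).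
\<close>

record pstate =
  al :: "int \<Rightarrow> complex"
  ga :: complex
  tu :: "int \<Rightarrow> complex"
  tb :: "int \<Rightarrow> complex"

definition A :: "pstate \<Rightarrow> int \<Rightarrow> complex" where
  "A x i = al x (i mod 3)"
definition T :: "pstate \<Rightarrow> int \<Rightarrow> complex" where
  "T x i = tu x (i mod 3)"
definition TB :: "pstate \<Rightarrow> int \<Rightarrow> complex" where
  "TB x i = tb x (i mod 3)"

definition uu :: "complex \<Rightarrow> pstate \<Rightarrow> int \<Rightarrow> complex" where
  "uu Q x i = inverse (Q ^ 2) * inverse (ga x ^ 4) * A x i ^ 6"
definition uh :: "complex \<Rightarrow> pstate \<Rightarrow> int \<Rightarrow> complex" where
  "uh Q x i = inverse Q * inverse (ga x ^ 2) * A x i ^ 3"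
definition vv :: "complex \<Rightarrow> pstate \<Rightarrow> int \<Rightarrow> complex" where
  "vv Q x i = Q ^ 2 * ga x ^ 4 * A x i ^ 6"
definition vh :: "complex \<Rightarrow> pstate \<Rightarrow> int \<Rightarrow> complex" where
  "vh Q x i = Q * ga x ^ 2 * A x i ^ 3"

definition act_s :: "complex \<Rightarrow> int \<Rightarrow> pstate \<Rightarrow> pstate" where
  "act_s Q i x =
    \<lparr> al = (\<lambda>j. if j mod 3 = i mod 3 then inverse (A x i) else A x j * A x i),
      ga = ga x,
      tu = (\<lambda>j. if j mod 3 = i mod 3
                 then (uu Q x i * T x (i+1) * TB x (i-1) + TB x (i+1) * T x (i-1))
                      / (uh Q x i * TB x i)
                 else T x j),
      tb = (\<lambda>j. if j mod 3 = i mod 3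
                 then (vv Q x i * TB x (i+1) * T x (i-1) + T x (i+1) * TB x (i-1))
                      / (vh Q x i * T x i)
                 else TB x j) \<rparr>"

definition ok_s :: "int \<Rightarrow> pstate \<Rightarrow> bool" where
  "ok_s i x \<longleftrightarrow> T x i \<noteq> 0 \<and> TB x i \<noteq> 0"

definition act_pi :: "pstate \<Rightarrow> pstate" where
  "act_pi x = \<lparr> al = (\<lambda>j. A x (j+1)), ga = ga x,
                tu = (\<lambda>j. T x (j+1)), tb = (\<lambda>j. TB x (j+1)) \<rparr>"

text \<open>r: swaps tau and taubar; on c it acts by c -> 1/(q c), i.e.
  gamma -> 1/(Q gamma) (so that r(u_i^(1/2)) = v_i^(1/2)).\<close>
definition act_r :: "complex \<Rightarrow> pstate \<Rightarrow> pstate" where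
  "act_r Q x = \<lparr> al = al x, ga = inverse (Q * ga x), tu = tb x, tb = tu x \<rparr>"

text \<open>w_0: fixes a_i and tau_i; acts on c by c -> 1/c, i.e. gamma -> 1/gamma
  (so that T_4 = r w_0 maps c to q c).\<close>
definition act_w0 :: "complex \<Rightarrow> pstate \<Rightarrow> pstate" where
  "act_w0 Q x =
    \<lparr> al = al x, ga = inverse (ga x), tu = tu x,
      tb = (\<lambda>i. A x (i+1) ^ 2
                 * (TB x i * T x (i+1) * T x (i+2)
                    + uu Q x (i-1) * T x i * TB x (i+1) * T x (i+2)
                    + inverse (uu Q x (i+1)) * T x i * T x (i+1) * TB x (i+2))
                 / (A x (i+2) ^ 2 * TB x (i+1) * TB x (i+2))) \<rparr>"

definition ok_w0 :: "pstate \<Rightarrow> bool" where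
  "ok_w0 x \<longleftrightarrow> (\<forall>i. TB x i \<noteq> 0)"

text \<open>R_1 = pi^2 s_1, R_1^-1 = s_1 pi, T_4 = r w_0, T_4^-1 = w_0 r
  (s_1, r, w_0 are involutions, pi^3 = 1).\<close>
definition act_R1 :: "complex \<Rightarrow> pstate \<Rightarrow> pstate" where
  "act_R1 Q x = act_s Q 1 (act_pi (act_pi x))"
definition ok_R1 :: "pstate \<Rightarrow> bool" where
  "ok_R1 x = ok_s 1 (act_pi (act_pi x))"
definition act_R1inv :: "complex \<Rightarrow> pstate \<Rightarrow> pstate" where
  "act_R1inv Q x = act_pi (act_s Q 1 x)"
definition ok_R1inv :: "pstate \<Rightarrow> bool" where
  "ok_R1inv x = ok_s 1 x"
definition act_T4 :: "complex \<Rightarrow> pstate \<Rightarrow> pstate" where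
  "act_T4 Q x = act_w0 Q (act_r Q x)"
definition ok_T4 :: "complex \<Rightarrow> pstate \<Rightarrow> bool" where
  "ok_T4 Q x = ok_w0 (act_r Q x)"
definition act_T4inv :: "complex \<Rightarrow> pstate \<Rightarrow> pstate" where
  "act_T4inv Q x = act_r Q (act_w0 Q x)"
definition ok_T4inv :: "pstate \<Rightarrow> bool" where
  "ok_T4inv x = ok_w0 x"

fun iter_ok :: "('s \<Rightarrow> 's) \<Rightarrow> ('s \<Rightarrow> bool) \<Rightarrow> nat \<Rightarrow> 's \<Rightarrow> 's option" where
  "iter_ok f ok 0 x = Some x"
| "iter_ok f ok (Suc n) x = (if ok x then iter_ok f ok n (f x) else None)"

definition R1pow :: "complex \<Rightarrow> int \<Rightarrow> pstate \<Rightarrow> pstate option" where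
  "R1pow Q k x = (if 0 \<le> k then iter_ok (act_R1 Q) ok_R1 (nat k) x
                  else iter_ok (act_R1inv Q) ok_R1inv (nat (- k)) x)"
definition T4pow :: "complex \<Rightarrow> int \<Rightarrow> pstate \<Rightarrow> pstate option" where
  "T4pow Q N x = (if 0 \<le> N then iter_ok (act_T4 Q) (ok_T4 Q) (nat N) x
                  else iter_ok (act_T4inv Q) ok_T4inv (nat (- N)) x)"

text \<open>tau^k_N = R_1^k T_4^N (tau_1) evaluated at x: the point map of
  R_1^k T_4^N applies R_1's map k times first, then T_4's map N times.
  None means some denominator vanished along the way.\<close>
definition tauKN :: "complex \<Rightarrow> int \<Rightarrow> int \<Rightarrow> pstate \<Rightarrow> complex option" where
  "tauKN Q k N x = map_option (\<lambda>y. T y 1) (Option.bind (R1pow Q k x) (T4pow Q N))"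

text \<open>Initial point with the specialisation a_2 = q^(1/2): with Qh = q^(1/12)
  (Qh^2 = Q), alpha_0 = a_0^(1/6), alpha_1 = Qh/alpha_0 (so a_0 a_1 a_2 = q),
  alpha_2 = Qh.\<close>
definition init :: "complex \<Rightarrow> complex \<Rightarrow> complex \<Rightarrow> complex \<Rightarrow> complex \<Rightarrow> complex
    \<Rightarrow> complex \<Rightarrow> complex \<Rightarrow> complex \<Rightarrow> pstate" where
  "init Qh a0 g t0 t1 t2 b0 b1 b2 =
    \<lparr> al = (\<lambda>j. if j mod 3 = 0 then a0 else if j mod 3 = 1 then Qh / a0 else Qh),
      ga = g,
      tu = (\<lambda>j. if j mod 3 = 0 then t0 else if j mod 3 = 1 then t1 else t2),
      tb = (\<lambda>j. if j mod 3 = 0 then b0 else if j mod 3 = 1 then b1 else b2) \<rparr>"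

end

theory Submission
  imports Defs
begin

text \<open>
  Let x_j = R_1^(k+j) x and z_(j,M) = T_4^M x_j, so that tau^(k+j)_M is the tau_1-coordinate of
  z_(j,M). Since R_1 = pi^2 s_1, consecutive points x_j and x_(j+1) are linked by a shift of the
  indices of tau and taubar together with the two bilinear relations defining s_1, and this link
  survives T_4, which only rescales gamma by Q. As T_4 turns taubar into tau, every tau occurring in
  the four equations is a coordinate of z_(2,N-1), z_(3,N-1), z_(2,N) or z_(3,N). The last two
  equations are the s_1-relations between z_(2,N) and z_(3,N); the first two are the formula for
  w_0 along the T_4-step from level N - 1 to level N, simplified by the s_1-relations one level
  below.
\<close>

lemma coordinates_mod_3 [simp]:
  "A x (i mod 3) = A x i" "T x (i mod 3) = T x i" "TB x (i mod 3) = TB x i"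
  by (simp_all add: A_def T_def TB_def)

lemma coordinates_mod_3_shift [simp]:
  "A x (i mod 3 + j) = A x (i + j)" "A x (i mod 3 - j) = A x (i - j)"
  "T x (i mod 3 + j) = T x (i + j)" "T x (i mod 3 - j) = T x (i - j)"
  "TB x (i mod 3 + j) = TB x (i + j)" "TB x (i mod 3 - j) = TB x (i - j)"
  by (simp_all add: A_def T_def TB_def mod_add_left_eq mod_diff_left_eq)

lemma coordinates_numeral [simp]:
  "numeral n \<ge> (3::int) \<Longrightarrow> A x (numeral n) = A x (numeral n mod 3)"
  "numeral n \<ge> (3::int) \<Longrightarrow> T x (numeral n) = T x (numeral n mod 3)"
  "numeral n \<ge> (3::int) \<Longrightarrow> TB x (numeral n) = TB x (numeral n mod 3)"
  "A x (- numeral n) = A x ((- numeral n) mod 3)"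
  "T x (- numeral n) = T x ((- numeral n) mod 3)"
  "TB x (- numeral n) = TB x ((- numeral n) mod 3)"
  by (simp_all only: coordinates_mod_3)

lemma coordinates_minus_one [simp]:
  "A x (-1) = A x 2" "T x (-1) = T x 2" "TB x (-1) = TB x 2"
  using coordinates_mod_3[of x "-1"] by simp_all

lemma act_pi_coordinates [simp]:
  "A (act_pi x) i = A x (i + 1)" "T (act_pi x) i = T x (i + 1)" "TB (act_pi x) i = TB x (i + 1)"
  "ga (act_pi x) = ga x"
  by (simp_all add: act_pi_def A_def T_def TB_def mod_add_left_eq)

lemma act_s_coordinates [simp]:
  "A (act_s Q i x) j = (if j mod 3 = i mod 3 then inverse (A x i) else A x j * A x i)"
  "T (act_s Q i x) j = (if j mod 3 = i mod 3
      then (uu Q x i * T x (i+1) * TB x (i-1) + TB x (i+1) * T x (i-1)) / (uh Q x i * TB x i)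
      else T x j)"
  "TB (act_s Q i x) j = (if j mod 3 = i mod 3
      then (vv Q x i * TB x (i+1) * T x (i-1) + T x (i+1) * TB x (i-1)) / (vh Q x i * T x i)
      else TB x j)"
  "ga (act_s Q i x) = ga x"
  by (simp_all add: act_s_def A_def T_def TB_def)

lemma act_r_coordinates [simp]:
  "A (act_r Q x) i = A x i" "T (act_r Q x) i = TB x i" "TB (act_r Q x) i = T x i"
  "ga (act_r Q x) = inverse (Q * ga x)"
  by (simp_all add: act_r_def A_def T_def TB_def)

lemma act_w0_coordinates [simp]:
  "A (act_w0 Q x) i = A x i" "T (act_w0 Q x) i = T x i" "ga (act_w0 Q x) = inverse (ga x)"
  "TB (act_w0 Q x) i = A x (i+1) ^ 2
      * (TB x i * T x (i+1) * T x (i+2)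
         + uu Q x (i-1) * T x i * TB x (i+1) * T x (i+2)
         + inverse (uu Q x (i+1)) * T x i * T x (i+1) * TB x (i+2))
      / (A x (i+2) ^ 2 * TB x (i+1) * TB x (i+2))"
  by (simp_all add: act_w0_def A_def T_def TB_def)
     (simp add: TB_def[symmetric] T_def[symmetric] A_def[symmetric] uu_def)

lemma all_mod_3_iff: "(\<forall>i::int. P (i mod 3)) \<longleftrightarrow> P 0 \<and> P 1 \<and> P 2"
proof
  assume P: "P 0 \<and> P 1 \<and> P 2"
  show "\<forall>i. P (i mod 3)"
  proof
    fix i :: int
    have "i mod 3 = 0 \<or> i mod 3 = 1 \<or> i mod 3 = 2" by auto
    with P show "P (i mod 3)" by auto
  qed
next
  assume "\<forall>i. P (i mod 3)"
  from this[rule_format, of 0] this[rule_format, of 1] this[rule_format, of 2]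
  show "P 0 \<and> P 1 \<and> P 2" by simp
qed

lemma ok_R1_iff: "ok_R1 x \<longleftrightarrow> T x 0 \<noteq> 0 \<and> TB x 0 \<noteq> 0"
  by (simp add: ok_R1_def ok_s_def)

lemma ok_R1inv_iff: "ok_R1inv x \<longleftrightarrow> T x 1 \<noteq> 0 \<and> TB x 1 \<noteq> 0"
  by (simp add: ok_R1inv_def ok_s_def)

lemma ok_T4_iff: "ok_T4 Q x \<longleftrightarrow> T x 0 \<noteq> 0 \<and> T x 1 \<noteq> 0 \<and> T x 2 \<noteq> 0"
  using all_mod_3_iff[of "\<lambda>i. T x i \<noteq> 0"] by (simp add: ok_T4_def ok_w0_def)

lemma ok_T4inv_iff: "ok_T4inv x \<longleftrightarrow> TB x 0 \<noteq> 0 \<and> TB x 1 \<noteq> 0 \<and> TB x 2 \<noteq> 0"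
  using all_mod_3_iff[of "\<lambda>i. TB x i \<noteq> 0"] by (simp add: ok_T4inv_def ok_w0_def)

lemma iter_ok_Suc_SomeD:
  "iter_ok f ok (Suc n) x = Some y \<Longrightarrow> \<exists>z. iter_ok f ok n x = Some z \<and> ok z \<and> y = f z"
  by (induction n arbitrary: x) (auto split: if_splits)

lemma iter_ok_invariant2:
  assumes "iter_ok f ok n x = Some y" "iter_ok f ok n x' = Some y'" "P 0 x x'"
    and step: "\<And>m z z'. P m z z' \<Longrightarrow> ok z \<Longrightarrow> ok z' \<Longrightarrow> P (Suc m) (f z) (f z')"
  shows "P n y y'"
  using assms(1,2)
proof (induction n arbitrary: y y')
  case 0
  with \<open>P 0 x x'\<close> show ?case by simp
next
  case (Suc n)
  obtain z z' where z: "iter_ok f ok n x = Some z" "ok z" "y = f z"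
    and z': "iter_ok f ok n x' = Some z'" "ok z'" "y' = f z'"
    using iter_ok_Suc_SomeD[OF Suc.prems(1)] iter_ok_Suc_SomeD[OF Suc.prems(2)] by blast
  have "P n z z'" by (rule Suc.IH[OF z(1) z'(1)])
  from step[OF this z(2) z'(2)] show ?case by (simp only: z(3) z'(3))
qed

definition iter_ok_int ::
    "('s \<Rightarrow> 's) \<Rightarrow> ('s \<Rightarrow> bool) \<Rightarrow> ('s \<Rightarrow> 's) \<Rightarrow> ('s \<Rightarrow> bool) \<Rightarrow> int \<Rightarrow> 's \<Rightarrow> 's option" where
  "iter_ok_int f ok g ok' k x =
     (if 0 \<le> k then iter_ok f ok (nat k) x else iter_ok g ok' (nat (- k)) x)"

lemma R1pow_eq: "R1pow Q = iter_ok_int (act_R1 Q) ok_R1 (act_R1inv Q) ok_R1inv"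
  by (simp add: fun_eq_iff R1pow_def iter_ok_int_def)

lemma T4pow_eq: "T4pow Q = iter_ok_int (act_T4 Q) (ok_T4 Q) (act_T4inv Q) ok_T4inv"
  by (simp add: fun_eq_iff T4pow_def iter_ok_int_def)

lemma iter_ok_int_invariant2:
  assumes "iter_ok_int f ok g ok' k x = Some y" "iter_ok_int f ok g ok' k x' = Some y'" "P 0 x x'"
    and up: "\<And>m z z'. P m z z' \<Longrightarrow> ok z \<Longrightarrow> ok z' \<Longrightarrow> P (m + 1) (f z) (f z')"
    and down: "\<And>m z z'. P m z z' \<Longrightarrow> ok' z \<Longrightarrow> ok' z' \<Longrightarrow> P (m - 1) (g z) (g z')"
  shows "P k y y'"
proof (cases "0 \<le> k")
  case True
  have "P (int (nat k)) y y'"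
  proof (rule iter_ok_invariant2[where P = "\<lambda>n. P (int n)"])
    show "iter_ok f ok (nat k) x = Some y" "iter_ok f ok (nat k) x' = Some y'"
      using assms(1,2) True by (simp_all add: iter_ok_int_def)
    show "P (int 0) x x'" using \<open>P 0 x x'\<close> by simp
    have Suc_eq: "int (Suc m) = int m + 1" for m by simp
    show "P (int (Suc m)) (f z) (f z')" if "P (int m) z z'" "ok z" "ok z'" for m z z'
      unfolding Suc_eq by (rule up[OF that])
  qed
  with True show ?thesis by simp
next
  case False
  have "P (- int (nat (- k))) y y'"
  proof (rule iter_ok_invariant2[where P = "\<lambda>n. P (- int n)"])
    show "iter_ok g ok' (nat (- k)) x = Some y" "iter_ok g ok' (nat (- k)) x' = Some y'"
      using assms(1,2) False by (simp_all add: iter_ok_int_def)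
    show "P (- int 0) x x'" using \<open>P 0 x x'\<close> by simp
    have Suc_eq: "- int (Suc m) = - int m - 1" for m by simp
    show "P (- int (Suc m)) (g z) (g z')" if "P (- int m) z z'" "ok' z" "ok' z'" for m z z'
      unfolding Suc_eq by (rule down[OF that])
  qed
  with False show ?thesis by simp
qed

lemma iter_ok_int_invariant:
  assumes "iter_ok_int f ok g ok' k x = Some y" "P 0 x"
    and "\<And>m z. P m z \<Longrightarrow> ok z \<Longrightarrow> P (m + 1) (f z)"
    and "\<And>m z. P m z \<Longrightarrow> ok' z \<Longrightarrow> P (m - 1) (g z)"
  shows "P k y"
  by (rule iter_ok_int_invariant2[where P = "\<lambda>m z z'. P m z", OF assms(1,1,2)])
     (simp_all add: assms(3,4))

lemma iter_ok_int_succ: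
  assumes "iter_ok_int f ok g ok' k x = Some y" "iter_ok_int f ok g ok' (k + 1) x = Some y'"
  shows "(ok y \<and> y' = f y) \<or> (ok' y' \<and> y = g y')"
proof (cases "0 \<le> k")
  case True
  then have "nat (k + 1) = Suc (nat k)" by simp
  with assms True have "iter_ok f ok (Suc (nat k)) x = Some y'" "iter_ok f ok (nat k) x = Some y"
    by (simp_all add: iter_ok_int_def)
  from iter_ok_Suc_SomeD[OF this(1)] this(2) show ?thesis by auto
next
  case False
  then have "nat (- k) = Suc (nat (- (k + 1)))" by simp
  moreover have "iter_ok_int f ok g ok' (k + 1) x = iter_ok g ok' (nat (- (k + 1))) x"
    using False by (simp add: iter_ok_int_def)
  ultimately have "iter_ok g ok' (Suc (nat (- (k + 1)))) x = Some y"
      "iter_ok g ok' (nat (- (k + 1))) x = Some y'"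
    using assms False by (simp_all add: iter_ok_int_def)
  from iter_ok_Suc_SomeD[OF this(1)] this(2) show ?thesis by auto
qed

definition has_params :: "complex \<Rightarrow> complex \<Rightarrow> complex \<Rightarrow> pstate \<Rightarrow> bool" where
  "has_params Qh a g x \<longleftrightarrow> A x 0 = a \<and> A x 1 = Qh / a \<and> A x 2 = Qh \<and> ga x = g"

text \<open>The relation between x and y = R_1 x: pi^2 shifts the indices, and s_1 replaces tau_1 and
  taubar_1 by the bilinear expressions below (with denominators cleared).\<close>

definition R1_shift :: "complex \<Rightarrow> complex \<Rightarrow> complex \<Rightarrow> pstate \<Rightarrow> pstate \<Rightarrow> bool" where
  "R1_shift Qh a g x y \<longleftrightarrow> has_params Qh a g x \<and> has_params Qh (Qh * a) g y \<and>
     T y 0 = T x 2 \<and> T y 2 = T x 1 \<and> TB y 0 = TB x 2 \<and> TB y 2 = TB x 1 \<and>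
     Qh^2 * g^2 * a^3 * T y 1 * TB x 0 = a^6 * T x 1 * TB x 2 + Qh^4 * g^4 * TB x 1 * T x 2 \<and>
     Qh^2 * g^2 * a^3 * TB y 1 * T x 0 = Qh^4 * g^4 * a^6 * TB x 1 * T x 2 + T x 1 * TB x 2"

lemma R1_shiftD:
  assumes "R1_shift Qh a g x y"
  shows "A x 0 = a" "A x 1 = Qh / a" "A x 2 = Qh" "ga x = g"
    "A y 0 = Qh * a" "A y 1 = Qh / (Qh * a)" "A y 2 = Qh" "ga y = g"
    "T y 0 = T x 2" "T y 2 = T x 1" "TB y 0 = TB x 2" "TB y 2 = TB x 1"
    "Qh^2 * g^2 * a^3 * T y 1 * TB x 0 = a^6 * T x 1 * TB x 2 + Qh^4 * g^4 * TB x 1 * T x 2"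
    "Qh^2 * g^2 * a^3 * TB y 1 * T x 0 = Qh^4 * g^4 * a^6 * TB x 1 * T x 2 + T x 1 * TB x 2"
  using assms unfolding R1_shift_def has_params_def by auto

lemma R1_shift_act_R1:
  assumes "Qh \<noteq> 0" "a \<noteq> 0" "g \<noteq> 0" "has_params Qh a g x" "ok_R1 x"
  shows "R1_shift Qh a g x (act_R1 (Qh^2) x)"
  using assms unfolding R1_shift_def has_params_def ok_R1_iff act_R1_def
  by (simp add: uu_def uh_def vv_def vh_def) (simp add: field_simps)

lemma R1_shift_act_R1inv:
  assumes "Qh \<noteq> 0" "a \<noteq> 0" "g \<noteq> 0" "has_params Qh (Qh * a) g y" "ok_R1inv y"
  shows "R1_shift Qh a g (act_R1inv (Qh^2) y) y"
  using assms unfolding R1_shift_def has_params_def ok_R1inv_iff act_R1inv_def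
  by (simp add: uu_def uh_def vv_def vh_def) (simp add: field_simps)

text \<open>The new shift relations lie in the ideal generated by the two old bilinear ones.\<close>

lemma R1_shift_act_T4:
  assumes "Qh \<noteq> 0" "a \<noteq> 0" "g \<noteq> 0" and R: "R1_shift Qh a g x y"
    and "ok_T4 (Qh^2) x" "ok_T4 (Qh^2) y"
  shows "R1_shift Qh a (Qh^2 * g) (act_T4 (Qh^2) x) (act_T4 (Qh^2) y)"
  using assms(1-3,5,6) R1_shiftD(13,14)[OF R]
  unfolding R1_shift_def has_params_def ok_T4_iff act_T4_def
  by (simp add: R1_shiftD(1-12)[OF R] uu_def field_simps) (intro conjI; algebra)

lemma R1_shift_act_T4inv:
  assumes "Qh \<noteq> 0" "a \<noteq> 0" "g \<noteq> 0" and R: "R1_shift Qh a g x y"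
    and "ok_T4inv x" "ok_T4inv y"
  shows "R1_shift Qh a (g / Qh^2) (act_T4inv (Qh^2) x) (act_T4inv (Qh^2) y)"
  using assms(1-3,5,6) R1_shiftD(13,14)[OF R]
  unfolding R1_shift_def has_params_def ok_T4inv_iff act_T4inv_def
  by (simp add: R1_shiftD(1-12)[OF R] uu_def field_simps) (intro conjI; algebra)

lemma has_params_act_R1:
  assumes "Qh \<noteq> 0" "a \<noteq> 0" "has_params Qh a g x"
  shows "has_params Qh (Qh * a) g (act_R1 Q x)"
  using assms unfolding has_params_def act_R1_def by (simp add: inverse_eq_divide)

lemma has_params_act_R1inv:
  assumes "Qh \<noteq> 0" "a \<noteq> 0" "has_params Qh (Qh * a) g x"
  shows "has_params Qh a g (act_R1inv Q x)"
  using assms unfolding has_params_def act_R1inv_def by simp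

lemma has_params_R1pow:
  assumes "Qh \<noteq> 0" "a \<noteq> 0" "has_params Qh a g x" "R1pow (Qh^2) k x = Some y"
  shows "has_params Qh (a * Qh powi k) g y"
  using assms(4)[unfolded R1pow_eq]
proof (rule iter_ok_int_invariant[where P = "\<lambda>m. has_params Qh (a * Qh powi m) g"])
  show "has_params Qh (a * Qh powi 0) g x" using assms(3) by simp
  show "has_params Qh (a * Qh powi (m + 1)) g (act_R1 (Qh^2) z)"
    if "has_params Qh (a * Qh powi m) g z" for m z
    using has_params_act_R1[OF assms(1) _ that] assms(1,2) by (simp add: power_int_add_1' power_int_not_zero mult_ac)
  show "has_params Qh (a * Qh powi (m - 1)) g (act_R1inv (Qh^2) z)"
    if "has_params Qh (a * Qh powi m) g z" for m z
  proof (rule has_params_act_R1inv)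
    have shift: "Qh * (a * Qh powi (m - 1)) = a * Qh powi m"
      using assms(1) power_int_minus_mult[of Qh m] by (metis mult.left_commute mult.commute)
    show "has_params Qh (Qh * (a * Qh powi (m - 1))) g z" unfolding shift by (rule that)
  qed (use assms(1,2) in \<open>simp_all add: power_int_not_zero\<close>)
qed

lemma R1_shift_R1pow:
  assumes "Qh \<noteq> 0" "a \<noteq> 0" "g \<noteq> 0" "has_params Qh a g x"
    and "R1pow (Qh^2) k x = Some y" "R1pow (Qh^2) (k + 1) x = Some y'"
  shows "R1_shift Qh (a * Qh powi k) g y y'"
proof -
  have nz: "a * Qh powi k \<noteq> 0" using assms(1,2) by (simp add: power_int_not_zero)
  have params: "has_params Qh (a * Qh powi k) g y" "has_params Qh (Qh * (a * Qh powi k)) g y'"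
    using has_params_R1pow[OF assms(1,2,4,5)] has_params_R1pow[OF assms(1,2,4,6)] assms(1)
    by (simp_all add: power_int_add_1' mult_ac)
  from iter_ok_int_succ[OF assms(5,6)[unfolded R1pow_eq]]
  show ?thesis
    using R1_shift_act_R1[OF assms(1) nz assms(3) params(1)]
      R1_shift_act_R1inv[OF assms(1) nz assms(3) params(2)] by auto
qed

lemma R1_shift_T4pow:
  assumes "Qh \<noteq> 0" "a \<noteq> 0" "g \<noteq> 0" "R1_shift Qh a g x x'"
    and "T4pow (Qh^2) M x = Some y" "T4pow (Qh^2) M x' = Some y'"
  shows "R1_shift Qh a (g * (Qh^2) powi M) y y'"
  using assms(5,6)[unfolded T4pow_eq]
proof (rule iter_ok_int_invariant2[where P = "\<lambda>m. R1_shift Qh a (g * (Qh^2) powi m)"])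
  show "R1_shift Qh a (g * (Qh^2) powi 0) x x'" using assms(4) by simp
  have nz: "g * (Qh^2) powi m \<noteq> 0" for m using assms(1,3) by (simp add: power_int_not_zero)
  show "R1_shift Qh a (g * (Qh^2) powi (m + 1)) (act_T4 (Qh^2) z) (act_T4 (Qh^2) z')"
    if "R1_shift Qh a (g * (Qh^2) powi m) z z'" "ok_T4 (Qh^2) z" "ok_T4 (Qh^2) z'" for m z z'
    using R1_shift_act_T4[OF assms(1,2) nz that] assms(1) by (simp add: power_int_add_1' mult_ac)
  show "R1_shift Qh a (g * (Qh^2) powi (m - 1)) (act_T4inv (Qh^2) z) (act_T4inv (Qh^2) z')"
    if "R1_shift Qh a (g * (Qh^2) powi m) z z'" "ok_T4inv z" "ok_T4inv z'" for m z z'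
    using R1_shift_act_T4inv[OF assms(1,2) nz that] assms(1) by (simp add: power_int_diff)
qed

definition T4_edge :: "complex \<Rightarrow> pstate \<Rightarrow> pstate \<Rightarrow> bool" where
  "T4_edge Q v w \<longleftrightarrow> (ok_T4 Q v \<and> w = act_T4 Q v) \<or> (ok_T4inv w \<and> v = act_T4inv Q w)"

lemma T4pow_edge:
  "T4pow Q M x = Some v \<Longrightarrow> T4pow Q (M + 1) x = Some w \<Longrightarrow> T4_edge Q v w"
  unfolding T4pow_eq T4_edge_def by (rule iter_ok_int_succ)

lemma T4_edge_T: "T4_edge Q v w \<Longrightarrow> T w i = TB v i"
  unfolding T4_edge_def act_T4_def act_T4inv_def by auto

lemma R1_shift_bilinear:
  assumes "Qh \<noteq> 0" "a \<noteq> 0" "g \<noteq> 0" "R1_shift Qh a g x y"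
  shows "g^2 * Qh^2 / a^3 * T y 1 * TB x 0 - Qh^4 * g^4 / a^6 * T x 2 * TB x 1 - TB x 2 * T x 1 = 0"
    and "1 / (Qh^2 * g^2 * a^3) * TB y 1 * T x 0 - 1 / (Qh^4 * g^4 * a^6) * T x 1 * TB x 2
           - TB x 1 * T x 2 = 0"
  using R1_shiftD(13,14)[OF assms(4)] assms(1-3) by (simp_all add: field_simps) algebra+

lemma R1_shift_act_T4_bilinear:
  assumes "Qh \<noteq> 0" "a \<noteq> 0" "g \<noteq> 0" and R: "R1_shift Qh a g x y" and "ok_T4 (Qh^2) x"
  shows "TB (act_T4 (Qh^2) x) 2 * T x 1 - a / (Qh^2 * g)^2 * TB y 1 * TB x 0
           - (Qh^2 * g)^4 / a^2 * TB x 2 * TB x 1 = 0"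
    and "TB (act_T4 (Qh^2) x) 1 * T x 2 - (Qh^2 * g)^2 * a * TB y 1 * TB x 0
           - 1 / ((Qh^2 * g)^4 * a^2) * TB x 1 * TB x 2 = 0"
  using assms(1-3,5) unfolding act_T4_def ok_T4_iff
  by (simp_all add: R1_shiftD(1-4)[OF R] uu_def field_simps)
     (use R1_shiftD(14)[OF R] in algebra)+

lemma R1_shift_act_T4inv_bilinear:
  assumes "Qh \<noteq> 0" "a \<noteq> 0" "g \<noteq> 0" and R: "R1_shift Qh a g x y" and "ok_T4inv x"
  shows "TB x 2 * T (act_T4inv (Qh^2) x) 1 - a / g^2 * T y 1 * T x 0 - g^4 / a^2 * T x 2 * T x 1 = 0"
    and "TB x 1 * T (act_T4inv (Qh^2) x) 2 - g^2 * a * T y 1 * T x 0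
           - 1 / (g^4 * a^2) * T x 1 * T x 2 = 0"
  using assms(1-3,5) unfolding act_T4inv_def ok_T4inv_iff
  by (simp_all add: R1_shiftD(1-4)[OF R] uu_def field_simps)
     (use R1_shiftD(13)[OF R] in algebra)+

lemma bilinear_equations_square:
  assumes nz: "Qh \<noteq> 0" "a \<noteq> 0" "g \<noteq> 0"
    and low: "R1_shift Qh a (g / Qh^2) v v'" and high: "R1_shift Qh a g w w'"
    and edge: "T4_edge (Qh^2) v w" "T4_edge (Qh^2) v' w'"
  shows "TB w 2 * T v 1 - a / g^2 * T w' 1 * T w 0 - g^4 / a^2 * T w 2 * T w 1 = 0" (is ?E1)
    and "TB w 1 * T v 2 - g^2 * a * T w' 1 * T w 0 - 1 / (g^4 * a^2) * T w 1 * T w 2 = 0" (is ?E2)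
    and "g^2 * Qh^2 / a^3 * T w' 1 * TB w 0 - Qh^4 * g^4 / a^6 * T w 2 * TB w 1 - TB w 2 * T w 1 = 0"
      (is ?E3)
    and "1 / (Qh^2 * g^2 * a^3) * TB w' 1 * T w 0 - 1 / (Qh^4 * g^4 * a^6) * T w 1 * TB w 2
           - TB w 1 * T w 2 = 0" (is ?E4)
proof -
  from edge(1) consider (up) "ok_T4 (Qh^2) v" "w = act_T4 (Qh^2) v"
    | (down) "ok_T4inv w" "v = act_T4inv (Qh^2) w"
    unfolding T4_edge_def by blast
  then have "?E1 \<and> ?E2"
  proof cases
    case up
    have "g / Qh^2 \<noteq> 0" "Qh^2 * (g / Qh^2) = g" using nz by simp_all
    note T4_step = R1_shift_act_T4_bilinear[OF nz(1,2) this(1) low up(1), unfolded this(2)]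
    have "T w i = TB v i" "T w' i = TB v' i" for i using T4_edge_T edge by blast+
    with T4_step show ?thesis unfolding up(2) by (simp add: ac_simps)
  next
    case down
    from R1_shift_act_T4inv_bilinear[OF nz high down(1)]
    show ?thesis unfolding down(2) by (simp add: ac_simps)
  qed
  then show ?E1 ?E2 by blast+
  show ?E3 ?E4 by (fact R1_shift_bilinear[OF nz high])+
qed

lemma tauKN_lattice:
  assumes nz: "Qh \<noteq> 0" "a \<noteq> 0" "g \<noteq> 0" and x: "has_params Qh a g x"
    and defined: "\<forall>j\<in>{k..k+3}. \<forall>M\<in>{N-1..N+1}. tauKN (Qh^2) j M x \<noteq> None"
  obtains Z where
    "\<And>j M. j \<in> {0..2} \<Longrightarrow> M \<in> {N-1..N+1} \<Longrightarrow>
       R1_shift Qh (a * Qh powi (k + j)) (g * (Qh^2) powi M) (Z j M) (Z (j + 1) M)"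
    "\<And>j M. j \<in> {0..3} \<Longrightarrow> M \<in> {N-1..N} \<Longrightarrow> T4_edge (Qh^2) (Z j M) (Z j (M + 1))"
    "\<And>j M. j \<in> {0..3} \<Longrightarrow> M \<in> {N-1..N+1} \<Longrightarrow> the (tauKN (Qh^2) (k + j) M x) = T (Z j M) 1"
proof
  define Y where "Y j = the (R1pow (Qh^2) (k + j) x)" for j
  define Z where "Z j M = the (T4pow (Qh^2) M (Y j))" for j M
  have points: "R1pow (Qh^2) (k + j) x = Some (Y j) \<and> T4pow (Qh^2) M (Y j) = Some (Z j M)
      \<and> the (tauKN (Qh^2) (k + j) M x) = T (Z j M) 1"
    if "j \<in> {0..3}" "M \<in> {N-1..N+1}" for j M
  proof -
    from that defined have "tauKN (Qh^2) (k + j) M x \<noteq> None" by auto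
    then show ?thesis
      unfolding tauKN_def Y_def Z_def
      by (cases "R1pow (Qh^2) (k + j) x"; cases "T4pow (Qh^2) M (the (R1pow (Qh^2) (k + j) x))") auto
  qed
  show "R1_shift Qh (a * Qh powi (k + j)) (g * (Qh^2) powi M) (Z j M) (Z (j + 1) M)"
    if "j \<in> {0..2}" "M \<in> {N-1..N+1}" for j M
  proof (rule R1_shift_T4pow)
    show "R1_shift Qh (a * Qh powi (k + j)) g (Y j) (Y (j + 1))"
      using R1_shift_R1pow[OF nz x] points[of j N] points[of "j + 1" N] that by (simp add: add.assoc)
    show "T4pow (Qh^2) M (Y j) = Some (Z j M)" "T4pow (Qh^2) M (Y (j + 1)) = Some (Z (j + 1) M)"
      using points[of j M] points[of "j + 1" M] that by auto
  qed (use nz in \<open>simp_all add: power_int_not_zero\<close>)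
  show "T4_edge (Qh^2) (Z j M) (Z j (M + 1))" if "j \<in> {0..3}" "M \<in> {N-1..N}" for j M
    using T4pow_edge points[of j M] points[of j "M + 1"] that by auto
  show "the (tauKN (Qh^2) (k + j) M x) = T (Z j M) 1" if "j \<in> {0..3}" "M \<in> {N-1..N+1}" for j M
    using points[OF that] by blast
qed

lemma tauKN_bilinear_equations:
  fixes Qh a g :: complex and k N :: int
  assumes nz: "Qh \<noteq> 0" "a \<noteq> 0" "g \<noteq> 0" and x: "has_params Qh a g x"
    and defined: "\<forall>j\<in>{k..k+3}. \<forall>M\<in>{N-1..N+1}. tauKN (Qh^2) j M x \<noteq> None"
  defines "\<tau> \<equiv> \<lambda>j M. the (tauKN (Qh^2) j M x)"
    and "a' \<equiv> a * Qh powi (k + 2)" and "g' \<equiv> g * (Qh^2) powi N"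
  shows "\<tau> (k+1) (N+1) * \<tau> (k+2) (N-1) - a' / g'^2 * \<tau> (k+3) N * \<tau> k N
           - g'^4 / a'^2 * \<tau> (k+1) N * \<tau> (k+2) N = 0" (is ?E1)
    and "\<tau> (k+2) (N+1) * \<tau> (k+1) (N-1) - g'^2 * a' * \<tau> (k+3) N * \<tau> k N
           - 1 / (g'^4 * a'^2) * \<tau> (k+2) N * \<tau> (k+1) N = 0" (is ?E2)
    and "g'^2 * Qh^2 / a'^3 * \<tau> (k+3) N * \<tau> k (N+1) - Qh^4 * g'^4 / a'^6 * \<tau> (k+1) N * \<tau> (k+2) (N+1)
           - \<tau> (k+1) (N+1) * \<tau> (k+2) N = 0" (is ?E3)
    and "1 / (Qh^2 * g'^2 * a'^3) * \<tau> (k+3) (N+1) * \<tau> k N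
           - 1 / (Qh^4 * g'^4 * a'^6) * \<tau> (k+2) N * \<tau> (k+1) (N+1)
           - \<tau> (k+2) (N+1) * \<tau> (k+1) N = 0" (is ?E4)
proof -
  obtain Z where shift: "\<And>j M. j \<in> {0..2} \<Longrightarrow> M \<in> {N-1..N+1} \<Longrightarrow>
       R1_shift Qh (a * Qh powi (k + j)) (g * (Qh^2) powi M) (Z j M) (Z (j + 1) M)"
    and edge: "\<And>j M. j \<in> {0..3} \<Longrightarrow> M \<in> {N-1..N} \<Longrightarrow> T4_edge (Qh^2) (Z j M) (Z j (M + 1))"
    and tau: "\<And>j M. j \<in> {0..3} \<Longrightarrow> M \<in> {N-1..N+1} \<Longrightarrow> \<tau> (k + j) M = T (Z j M) 1"
    using tauKN_lattice[OF nz x defined] unfolding \<tau>_def by blast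
  have "g * (Qh^2) powi (N - 1) = g' / Qh^2" using nz(1) by (simp add: g'_def power_int_diff)
  then have low: "R1_shift Qh a' (g' / Qh^2) (Z 2 (N-1)) (Z 3 (N-1))"
    using shift[of 2 "N-1"] by (simp add: a'_def)
  have high: "R1_shift Qh a' g' (Z 2 N) (Z 3 N)"
    using shift[of 2 N] by (simp add: a'_def g'_def)
  have nz': "a' \<noteq> 0" "g' \<noteq> 0" using nz by (simp_all add: a'_def g'_def power_int_not_zero)
  have edges: "T4_edge (Qh^2) (Z 2 (N-1)) (Z 2 N)" "T4_edge (Qh^2) (Z 3 (N-1)) (Z 3 N)"
    using edge[of 2 "N-1"] edge[of 3 "N-1"] by simp_all
  note square = bilinear_equations_square[OF nz(1) nz' low high edges]
  have "T (Z 2 M) 0 = T (Z 0 M) 1" "T (Z 2 M) 2 = T (Z 1 M) 1"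
    "TB (Z 2 M) 0 = TB (Z 0 M) 1" "TB (Z 2 M) 2 = TB (Z 1 M) 1" if "M \<in> {N-1..N+1}" for M
    using R1_shiftD(9-12)[OF shift[of 0 M]] R1_shiftD(9-12)[OF shift[of 1 M]] that by simp_all
  moreover have "T (Z j (N + 1)) 1 = TB (Z j N) 1" if "j \<in> {0..3}" for j
    using T4_edge_T[OF edge[of j N]] that by simp
  ultimately have "\<tau> k N = T (Z 2 N) 0" "\<tau> (k+1) N = T (Z 2 N) 2" "\<tau> (k+2) N = T (Z 2 N) 1"
    "\<tau> (k+3) N = T (Z 3 N) 1" "\<tau> k (N+1) = TB (Z 2 N) 0" "\<tau> (k+1) (N+1) = TB (Z 2 N) 2"
    "\<tau> (k+2) (N+1) = TB (Z 2 N) 1" "\<tau> (k+3) (N+1) = TB (Z 3 N) 1"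
    "\<tau> (k+1) (N-1) = T (Z 2 (N-1)) 2" "\<tau> (k+2) (N-1) = T (Z 2 (N-1)) 1"
    using tau[of 0 N] tau[of 1 N] tau[of 2 N] tau[of 3 N] tau[of 0 "N+1"] tau[of 1 "N+1"]
      tau[of 2 "N+1"] tau[of 3 "N+1"] tau[of 1 "N-1"] tau[of 2 "N-1"] by simp_all
  with square show ?E1 ?E2 ?E3 ?E4 by (simp_all only:)
qed

lemma tauKN_coefficients:
  fixes Qh \<alpha> \<gamma> :: complex and k N :: int
  assumes "Qh \<noteq> 0" "\<alpha> \<noteq> 0" "\<gamma> \<noteq> 0"
  defines "a \<equiv> \<alpha> * Qh powi (k + 2)" and "g \<equiv> \<gamma> * (Qh^2) powi N"
  shows "Qh powi (k-4*N+2) * \<gamma> powi (-2) * \<alpha> = a / g^2"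
    and "(Qh^2) powi (-k+4*N-2) * \<gamma> ^ 4 * \<alpha> powi (-2) = g^4 / a^2"
    and "Qh powi (k+4*N+2) * \<gamma> ^ 2 * \<alpha> = g^2 * a"
    and "(Qh^2) powi (-k-4*N-2) * \<gamma> powi (-4) * \<alpha> powi (-2) = 1 / (g^4 * a^2)"
    and "Qh powi (-(3*k-4*N+4)) * \<gamma> ^ 2 * \<alpha> powi (-3) = g^2 * Qh^2 / a^3"
    and "(Qh^2) powi (-3*k+4*N-4) * \<gamma> ^ 4 * \<alpha> powi (-6) = Qh^4 * g^4 / a^6"
    and "Qh powi (-(3*k+4*N+8)) * \<gamma> powi (-2) * \<alpha> powi (-3) = 1 / (Qh^2 * g^2 * a^3)"
    and "(Qh^2) powi (-3*k-4*N-8) * \<gamma> powi (-4) * \<alpha> powi (-6) = 1 / (Qh^4 * g^4 * a^6)"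
  using assms
  by (simp_all add: power_int_add power_int_diff power_int_minus power_int_mult_distrib
      power_int_power power_int_power' field_simps)

theorem propositionB7:
  fixes Qh \<alpha>0 \<gamma> t0 t1 t2 b0 b1 b2 :: complex and k N :: int
  assumes "Qh \<noteq> 0" and "\<alpha>0 \<noteq> 0" and "\<gamma> \<noteq> 0"
    and "\<forall>j\<in>{k..k+3}. \<forall>M\<in>{N-1..N+1}.
           tauKN (Qh^2) j M (init Qh \<alpha>0 \<gamma> t0 t1 t2 b0 b1 b2) \<noteq> None"
  shows "let \<tau> = (\<lambda>j M. the (tauKN (Qh^2) j M (init Qh \<alpha>0 \<gamma> t0 t1 t2 b0 b1 b2)));
             Q = Qh^2
         in \<tau> (k+1) (N+1) * \<tau> (k+2) (N-1)
              - Qh powi (k-4*N+2) * \<gamma> powi (-2) * \<alpha>0 * \<tau> (k+3) N * \<tau> k N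
              - Q powi (-k+4*N-2) * \<gamma> ^ 4 * \<alpha>0 powi (-2) * \<tau> (k+1) N * \<tau> (k+2) N = 0
          \<and> \<tau> (k+2) (N+1) * \<tau> (k+1) (N-1)
              - Qh powi (k+4*N+2) * \<gamma> ^ 2 * \<alpha>0 * \<tau> (k+3) N * \<tau> k N
              - Q powi (-k-4*N-2) * \<gamma> powi (-4) * \<alpha>0 powi (-2) * \<tau> (k+2) N * \<tau> (k+1) N = 0
          \<and> Qh powi (-(3*k-4*N+4)) * \<gamma> ^ 2 * \<alpha>0 powi (-3) * \<tau> (k+3) N * \<tau> k (N+1)
              - Q powi (-3*k+4*N-4) * \<gamma> ^ 4 * \<alpha>0 powi (-6) * \<tau> (k+1) N * \<tau> (k+2) (N+1)
              - \<tau> (k+1) (N+1) * \<tau> (k+2) N = 0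
          \<and> Qh powi (-(3*k+4*N+8)) * \<gamma> powi (-2) * \<alpha>0 powi (-3) * \<tau> (k+3) (N+1) * \<tau> k N
              - Q powi (-3*k-4*N-8) * \<gamma> powi (-4) * \<alpha>0 powi (-6) * \<tau> (k+2) N * \<tau> (k+1) (N+1)
              - \<tau> (k+2) (N+1) * \<tau> (k+1) N = 0"
proof -
  have "has_params Qh \<alpha>0 \<gamma> (init Qh \<alpha>0 \<gamma> t0 t1 t2 b0 b1 b2)"
    by (simp add: has_params_def init_def A_def)
  from tauKN_bilinear_equations[OF assms(1-3) this assms(4)]
  show ?thesis unfolding Let_def tauKN_coefficients[OF assms(1-3)] by blast
qed

end
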